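(* Let $G_1,\dots,G_r$ and $H_1,\dots,H_r$ be finite simple graphs, $S=\bigoplus_{d=1}^r\widehat{G_d}\otimes\mathcal{C}_d$ and $T=\bigoplus_{d=1}^r\widehat{H_d}\otimes\mathcal{C}_d$. The following are equivalent: (1) $T\le S$; (2) there exist a function $\varphi:\bigsqcup_{d=1}^rV(H_d)\to\bigsqcup_{d=1}^rV(G_d)$ and isometries $U_h:\mathbb{C}^{\pi(h)}\to\mathbb{C}^{\pi(\varphi(h))}$ for $h\in\bigsqcup_{d}V(H_d)$ such that for all $h,h'$: if $h\not\simeq h'$ then ($\varphi(h)\not\simeq\varphi(h')$ or $U_h^*U_{h'}=0$); and if $h\simeq h'$ and $\varphi(h)\simeq\varphi(h')$ then $U_h^*U_{h'}=cI_{\pi(h)}$ for some $c\in\mathbb{C}$.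
   Context: A noncommutative graph is a subspace $S\subseteq B(\mathcal{H})$ ($\mathcal{H}$ finite-dimensional complex Hilbert space) with $I\in S$, $S^*=S$. A cohomomorphism from $T\subseteq B(\mathcal{K})$ to $S\subseteq B(\mathcal{H})$ is a finite family of linear maps $E_i:\mathcal{K}\to\mathcal{H}$ with $\sum_iE_i^*E_i=I$ and $E_i^*SE_j\subseteq T$ for all $i,j$; write $T\le S$ if one exists. Tensor product and direct sum of noncommutative graphs are $\operatorname{span}\{A\otimes B\}$ and $\{A\oplus B\}$. For a finite simple graph $G$, $\widehat{G}=\operatorname{span}\{|x\rangle\langle x'|:x,x'\in V(G),\ x=x'\text{ or }x\sim x'\}\subseteq B(\mathbb{C}^{V(G)})$; $\mathcal{C}_d=\mathbb{C}I\subseteq B(\mathbb{C}^d)$. For a direct sum $\bigoplus_{d=1}^r\widehat{G_d}\otimes\mathcal{C}_d$, $\pi:\bigsqcup_dV(G_d)\to\{1,\dots,r\}$ sends $g\in V(G_d)$ to $d$, and for $g\in V(G_d)$, $g'\in V(G_{d'})$ we write $g\simeq g'$ iff $d=d'$ and $g,g'$ are equal or adjacent in $G_d$ (similarly for the $H_d$). *)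

theory Defs
  imports "Jordan_Normal_Form.Schur_Decomposition"
begin

text \<open>Matrices over the complex numbers represent operators on finite-dimensional
  Hilbert spaces; a noncommutative graph on C^n is a set of n x n matrices.\<close>

definition cohom :: "complex mat set \<Rightarrow> nat \<Rightarrow> complex mat set \<Rightarrow> nat \<Rightarrow> bool" where
  "cohom T k S n \<longleftrightarrow> (\<exists>Es :: complex mat list.
      (\<forall>E\<in>set Es. E \<in> carrier_mat n k) \<and>
      foldr (+) (map (\<lambda>E. mat_adjoint E * E) Es) (0\<^sub>m k k) = 1\<^sub>m k \<and>
      (\<forall>Ei\<in>set Es. \<forall>Ej\<in>set Es. \<forall>A\<in>S. mat_adjoint Ei * A * Ej \<in> T))"

text \<open>Kronecker product A (x) B (basis of C^a (x) C^b indexed by i*b + k).\<close>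
definition kron :: "complex mat \<Rightarrow> complex mat \<Rightarrow> complex mat" where
  "kron A B = mat (dim_row A * dim_row B) (dim_col A * dim_col B)
     (\<lambda>(i,j). A $$ (i div dim_row B, j div dim_col B) * B $$ (i mod dim_row B, j mod dim_col B))"

text \<open>Graph G on vertex set {0..<n} with adjacency E:
  G-hat = span of |x><x'| with x = x' or x ~ x'.\<close>
definition ghat :: "nat \<Rightarrow> (nat \<Rightarrow> nat \<Rightarrow> bool) \<Rightarrow> complex mat set" where
  "ghat n E = {A \<in> carrier_mat n n. \<forall>x<n. \<forall>x'<n. A $$ (x,x') \<noteq> 0 \<longrightarrow> x = x' \<or> E x x'}"

definition cI :: "nat \<Rightarrow> complex mat set" where
  "cI d = {c \<cdot>\<^sub>m 1\<^sub>m d | c. True}"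

definition ncg_tensor :: "nat \<Rightarrow> complex mat set \<Rightarrow> nat \<Rightarrow> complex mat set \<Rightarrow> complex mat set" where
  "ncg_tensor a S b T = {foldr (+) (map (\<lambda>(c,A,B). c \<cdot>\<^sub>m kron A B) L) (0\<^sub>m (a*b) (a*b)) | L.
      \<forall>(c,A,B)\<in>set L. A \<in> S \<and> B \<in> T}"

fun block_diag :: "complex mat list \<Rightarrow> complex mat" where
  "block_diag [] = 0\<^sub>m 0 0"
| "block_diag (A # As) = (let B = block_diag As in
     four_block_mat A (0\<^sub>m (dim_row A) (dim_col B)) (0\<^sub>m (dim_row B) (dim_col A)) B)"

definition ncg_dsum :: "nat \<Rightarrow> (nat \<Rightarrow> complex mat set) \<Rightarrow> complex mat set" where
  "ncg_dsum r S = {block_diag (map M [1..<r+1]) | M. \<forall>d\<in>{1..r}. M d \<in> S d}"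

text \<open>The noncommutative graph bigoplus_{d=1}^r G_d-hat (x) C_d, where G_d has
  vertex set {0..<n d} and adjacency E d.\<close>
definition ncg_S :: "nat \<Rightarrow> (nat \<Rightarrow> nat) \<Rightarrow> (nat \<Rightarrow> nat \<Rightarrow> nat \<Rightarrow> bool) \<Rightarrow> complex mat set" where
  "ncg_S r n E = ncg_dsum r (\<lambda>d. ncg_tensor (n d) (ghat (n d) (E d)) d (cI d))"

definition ncg_dim :: "nat \<Rightarrow> (nat \<Rightarrow> nat) \<Rightarrow> nat" where
  "ncg_dim r n = (\<Sum>d\<in>{1..r}. n d * d)"

text \<open>Disjoint union of the vertex sets: pairs (d, x) with 1 <= d <= r, x < n d;
  pi (d, x) = d.\<close>
definition vtx :: "nat \<Rightarrow> (nat \<Rightarrow> nat) \<Rightarrow> (nat \<times> nat) set" where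
  "vtx r n = {(d, x). d \<in> {1..r} \<and> x < n d}"

definition piv :: "nat \<times> nat \<Rightarrow> nat" where
  "piv g = fst g"

definition simeq :: "(nat \<Rightarrow> nat \<Rightarrow> nat \<Rightarrow> bool) \<Rightarrow> nat \<times> nat \<Rightarrow> nat \<times> nat \<Rightarrow> bool" where
  "simeq E g g' \<longleftrightarrow> fst g = fst g' \<and> (snd g = snd g' \<or> E (fst g) (snd g) (snd g'))"

definition simple_graph :: "nat \<Rightarrow> (nat \<Rightarrow> nat \<Rightarrow> bool) \<Rightarrow> bool" where
  "simple_graph n E \<longleftrightarrow> (\<forall>x<n. \<not> E x x) \<and> (\<forall>x<n. \<forall>y<n. E x y \<longleftrightarrow> E y x)"

end

(*
  Both noncommutative graphs are block diagonal.  Writing C^(ncg_dim r n) as the direct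
  sum, over the vertices g = (d, x), of copies of C^d, an operator lies in ncg_S exactly
  when its (g, g')-block is a scalar multiple of the identity if g ~ g' and zero otherwise.

  Given phi and the isometries U h, the operators E_h = |phi h><h| (x) U h form a
  cohomomorphism: sum_h E_h^* E_h = I, and the only nonzero block of E_h^* X E_h' is the
  (h, h')-block U_h^* X_(phi h, phi h') U_h', which the conditions on U make scalar or zero
  as required.

  Conversely, let (E_i) be a cohomomorphism.  Since sum_i E_i^* E_i = I, every vertex h has
  some E_i and some vertex phi h such that the block V_h of E_i at (phi h, h) is nonzero.
  If phi h ~ phi h', the operator |phi h><phi h'| (x) I lies in ncg_S, and the
  (h, h')-block of its image E_i^* (...) E_j is V_h^* V_h'; hence V_h^* V_h' is scalar if
  h ~ h' and zero otherwise.  In particular V_h^* V_h is a positive multiple of I, and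
  U h is V_h normalised.
*)
theory Submission
  imports Defs
begin

lemma sum_sum_eq_single:
  assumes "finite A" "finite B" "a \<in> A" "b \<in> B"
    and "\<And>x y. x \<in> A \<Longrightarrow> y \<in> B \<Longrightarrow> (x, y) \<noteq> (a, b) \<Longrightarrow> f x y = 0"
  shows "(\<Sum>x\<in>A. \<Sum>y\<in>B. f x y) = f a b"
proof -
  have "(\<Sum>y\<in>B. f x y) = (if x = a then f a b else 0)" if "x \<in> A" for x
  proof -
    have "(\<Sum>y\<in>B. f x y) = (\<Sum>y\<in>B. if y = b then (if x = a then f a b else 0) else 0)"
      using assms(5) that by (intro sum.cong refl) auto
    then show ?thesis
      using assms(2,4) by simp
  qed
  then show ?thesis
    using assms(1,3) by simp
qed

lemma mat_adjoint_carrier: "A \<in> carrier_mat n k \<Longrightarrow> mat_adjoint A \<in> carrier_mat k n"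
  unfolding mat_adjoint_def by auto

lemma dim_mat_adjoint [simp]:
  "dim_row (mat_adjoint A) = dim_col A" "dim_col (mat_adjoint A) = dim_row A"
  unfolding mat_adjoint_def by simp_all

lemma index_mat_adjoint:
  "A \<in> carrier_mat n k \<Longrightarrow> i < k \<Longrightarrow> j < n \<Longrightarrow> mat_adjoint A $$ (i, j) = cnj (A $$ (j, i))"
  unfolding mat_adjoint_def by (auto simp: mat_of_rows_index)

lemma index_mult_mat_sum:
  assumes "A \<in> carrier_mat m n" "B \<in> carrier_mat n k" "i < m" "j < k"
  shows "(A * B) $$ (i, j) = (\<Sum>a<n. A $$ (i, a) * B $$ (a, j))"
  using assms by (auto simp: scalar_prod_def intro!: sum.cong)

lemma index_adjoint_mult:
  assumes "A \<in> carrier_mat n m1" "B \<in> carrier_mat n m2" "i < m1" "j < m2"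
  shows "(mat_adjoint A * B) $$ (i, j) = (\<Sum>a<n. cnj (A $$ (a, i)) * B $$ (a, j))"
  unfolding index_mult_mat_sum[OF mat_adjoint_carrier[OF assms(1)] assms(2-4)]
  using assms by (intro sum.cong) (auto simp: index_mat_adjoint)

lemma index_adjoint_mult_mult:
  assumes "A \<in> carrier_mat n1 m1" "X \<in> carrier_mat n1 n2" "B \<in> carrier_mat n2 m2" "i < m1" "j < m2"
  shows "(mat_adjoint A * X * B) $$ (i, j) =
    (\<Sum>b<n2. \<Sum>a<n1. cnj (A $$ (a, i)) * X $$ (a, b) * B $$ (b, j))"
proof -
  have AX: "mat_adjoint A * X \<in> carrier_mat m1 n2"
    using mat_adjoint_carrier[OF assms(1)] assms(2) by simp
  show ?thesis
    unfolding index_mult_mat_sum[OF AX assms(3-5)]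
    using assms
    by (intro sum.cong) (simp_all del: index_mult_mat add: index_adjoint_mult[OF assms(1,2)] sum_distrib_right)
qed

lemma foldr_add_mat:
  assumes "\<forall>x\<in>set xs. f x \<in> carrier_mat m n"
  shows "foldr (+) (map f xs) (0\<^sub>m m n) \<in> carrier_mat m n"
    and "i < m \<Longrightarrow> j < n \<Longrightarrow> foldr (+) (map f xs) (0\<^sub>m m n) $$ (i, j) = (\<Sum>x\<leftarrow>xs. f x $$ (i, j))"
  using assms by (induction xs) auto

lemma mat_adjoint_zero [simp]: "mat_adjoint (0\<^sub>m n m) = (0\<^sub>m m n :: complex mat)"
  by (rule eq_matI) (auto simp: index_mat_adjoint[of _ n m])

lemma mult_smult_one_mult:
  fixes A B :: "'a :: comm_semiring_1 mat"
  assumes "A \<in> carrier_mat m n" "B \<in> carrier_mat n k"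
  shows "A * (c \<cdot>\<^sub>m 1\<^sub>m n) * B = c \<cdot>\<^sub>m (A * B)"
proof -
  have "A * (c \<cdot>\<^sub>m 1\<^sub>m n) = c \<cdot>\<^sub>m A"
    using assms(1) by (simp add: mult_smult_distrib[OF assms(1) one_carrier_mat[of n]])
  then show ?thesis
    using assms by (simp add: mult_smult_assoc_mat)
qed

definition col_norm :: "complex mat \<Rightarrow> nat \<Rightarrow> real" where
  "col_norm V j = sqrt (\<Sum>i<dim_row V. (cmod (V $$ (i, j)))\<^sup>2)"

lemma index_adjoint_mult_self:
  assumes "j < dim_col V"
  shows "(mat_adjoint V * V) $$ (j, j) = of_real ((col_norm V j)\<^sup>2)"
proof -
  have "(mat_adjoint V * V) $$ (j, j) = (\<Sum>i<dim_row V. cnj (V $$ (i, j)) * V $$ (i, j))"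
    using assms by (intro index_adjoint_mult) auto
  also have "\<dots> = (\<Sum>i<dim_row V. of_real ((cmod (V $$ (i, j)))\<^sup>2))"
    by (intro sum.cong refl) (metis complex_norm_square mult.commute)
  also have "\<dots> = of_real ((col_norm V j)\<^sup>2)"
    by (simp add: col_norm_def sum_nonneg)
  finally show ?thesis .
qed

lemma col_norm_pos: "i < dim_row V \<Longrightarrow> V $$ (i, j) \<noteq> 0 \<Longrightarrow> 0 < col_norm V j"
  unfolding col_norm_def by (intro real_sqrt_gt_zero sum_pos2[of _ i]) auto

lemma adjoint_smult_mult_smult:
  assumes V: "V \<in> carrier_mat m n1" and W: "W \<in> carrier_mat m n2"
  shows "mat_adjoint (a \<cdot>\<^sub>m V) * (b \<cdot>\<^sub>m W) = (cnj a * b) \<cdot>\<^sub>m (mat_adjoint V * W)"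
    (is "?L = ?R")
proof (rule eq_matI)
  fix i j
  assume "i < dim_row ?R" "j < dim_col ?R"
  then have ij: "i < n1" "j < n2"
    using V W by auto
  show "?L $$ (i, j) = ?R $$ (i, j)"
    using V W ij
    by (simp add: index_adjoint_mult[OF smult_carrier_mat[OF V] smult_carrier_mat[OF W] ij]
        index_adjoint_mult[OF V W ij] sum_distrib_left mult_ac)
qed (use V W in auto)

definition col_normalize :: "complex mat \<Rightarrow> complex mat" where
  "col_normalize V = complex_of_real (inverse (col_norm V 0)) \<cdot>\<^sub>m V"

lemma adjoint_mult_col_normalize:
  assumes "V \<in> carrier_mat m n1" "W \<in> carrier_mat m n2"
  shows "mat_adjoint (col_normalize V) * col_normalize W =
    complex_of_real (inverse (col_norm V 0 * col_norm W 0)) \<cdot>\<^sub>m (mat_adjoint V * W)"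
  using assms by (simp add: col_normalize_def adjoint_smult_mult_smult)

lemma adjoint_mult_col_normalize_scalar:
  assumes "V \<in> carrier_mat m n1" "W \<in> carrier_mat m n2"
    and "mat_adjoint V * W = (if P then c \<cdot>\<^sub>m 1\<^sub>m n1 else 0\<^sub>m n1 n2)"
  shows "\<exists>c'. mat_adjoint (col_normalize V) * col_normalize W = (if P then c' \<cdot>\<^sub>m 1\<^sub>m n1 else 0\<^sub>m n1 n2)"
  using assms
  by (intro exI[of _ "complex_of_real (inverse (col_norm V 0 * col_norm W 0)) * c"])
    (auto intro!: eq_matI simp: adjoint_mult_col_normalize)

(* If V^* V = c I, all columns of V have norm sqrt c, so dividing by the norm of
   column 0 gives an isometry. *)
lemma col_normalize_isometry:
  assumes V: "V \<in> carrier_mat m n" and n: "0 < n" and gram: "mat_adjoint V * V = c \<cdot>\<^sub>m 1\<^sub>m n"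
    and pos: "0 < col_norm V 0"
  shows "mat_adjoint (col_normalize V) * col_normalize V = 1\<^sub>m n"
proof -
  have "c = complex_of_real ((col_norm V 0)\<^sup>2)"
    using index_adjoint_mult_self[of 0 V] V n gram by simp
  then show ?thesis
    using V pos by (auto intro!: eq_matI simp: adjoint_mult_col_normalize[OF V V] gram power2_eq_square
        field_simps simp flip: of_real_mult)
qed

lemma kraus_column_nonzero:
  fixes Es :: "complex mat list"
  assumes Es: "\<forall>E\<in>set Es. E \<in> carrier_mat m n"
    and sum: "foldr (+) (map (\<lambda>E. mat_adjoint E * E) Es) (0\<^sub>m n n) = 1\<^sub>m n"
    and j: "j < n"
  obtains E i where "E \<in> set Es" "i < m" "E $$ (i, j) \<noteq> 0"
proof (rule ccontr)
  assume "\<not> thesis"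
  then have zero: "\<forall>E\<in>set Es. \<forall>i<m. E $$ (i, j) = 0"
    using that by blast
  have EE: "\<forall>E\<in>set Es. mat_adjoint E * E \<in> carrier_mat n n"
    using Es by (auto intro: mult_carrier_mat[OF mat_adjoint_carrier])
  have "1\<^sub>m n $$ (j, j) = (\<Sum>E\<leftarrow>Es. (mat_adjoint E * E) $$ (j, j))"
    using foldr_add_mat(2)[OF EE j j] sum by simp
  also have "\<dots> = 0"
  proof -
    have "\<forall>E\<in>set Es. (mat_adjoint E * E) $$ (j, j) = 0"
    proof
      fix E
      assume E: "E \<in> set Es"
      then have Em: "E \<in> carrier_mat m n"
        using Es by blast
      show "(mat_adjoint E * E) $$ (j, j) = 0"
        unfolding index_adjoint_mult[OF Em Em j j] using zero E by (intro sum.neutral) auto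
    qed
    then show ?thesis
      by (induction Es) auto
  qed
  finally show False
    using j by simp
qed

section \<open>Block diagonal matrices and Kronecker products\<close>

definition block_offset :: "(nat \<Rightarrow> nat) \<Rightarrow> nat \<Rightarrow> nat \<Rightarrow> nat" where
  "block_offset sz a d = (\<Sum>i\<in>{a..<d}. sz i)"

lemma block_offset_Suc: "a \<le> d \<Longrightarrow> block_offset sz a (Suc d) = block_offset sz a d + sz d"
  unfolding block_offset_def by simp

lemma block_offset_Cons: "a < d \<Longrightarrow> block_offset sz a d = sz a + block_offset sz (Suc a) d"
  unfolding block_offset_def by (simp add: sum.atLeast_Suc_lessThan)

lemma block_offset_mono: "d \<le> d' \<Longrightarrow> block_offset sz a d \<le> block_offset sz a d'"
  unfolding block_offset_def by (rule sum_mono2) auto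

lemma block_offset_cases:
  assumes "p < block_offset sz a b"
  obtains d i where "d \<in> {a..<b}" "i < sz d" "p = block_offset sz a d + i"
  using assms
proof (induction b arbitrary: thesis)
  case 0
  then show ?case by (simp add: block_offset_def)
next
  case (Suc b)
  show ?case
  proof (cases "a \<le> b \<and> block_offset sz a b \<le> p")
    case True
    then show ?thesis
      using Suc.prems by (intro Suc.prems(1)[of b "p - block_offset sz a b"]) (auto simp: block_offset_Suc)
  next
    case False
    moreover have "a \<le> b" if "\<not> a \<le> b"
      using Suc.prems(2) that by (simp add: block_offset_def)
    ultimately have "p < block_offset sz a b"
      by auto
    then obtain d i where "d \<in> {a..<b}" "i < sz d" "p = block_offset sz a d + i"
      using Suc.IH by blast
    then show ?thesis
      by (intro Suc.prems(1)) auto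
  qed
qed

lemma index_four_block_diag:
  assumes "A \<in> carrier_mat s s" "B \<in> carrier_mat t t"
  defines "F \<equiv> four_block_mat A (0\<^sub>m s t) (0\<^sub>m t s) B"
  shows "i < s \<Longrightarrow> j < s \<Longrightarrow> F $$ (i, j) = A $$ (i, j)"
    and "i < s \<Longrightarrow> j < t \<Longrightarrow> F $$ (i, s + j) = 0"
    and "i < t \<Longrightarrow> j < s \<Longrightarrow> F $$ (s + i, j) = 0"
    and "i < t \<Longrightarrow> j < t \<Longrightarrow> F $$ (s + i, s + j) = B $$ (i, j)"
  using assms unfolding F_def by (subst index_mat_four_block; force)+

lemma block_diag_upt:
  assumes "\<forall>d\<in>{a..<b}. M d \<in> carrier_mat (sz d) (sz d)"
  shows "block_diag (map M [a..<b]) \<in> carrier_mat (block_offset sz a b) (block_offset sz a b) \<and>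
    (\<forall>d\<in>{a..<b}. \<forall>d'\<in>{a..<b}. \<forall>i<sz d. \<forall>j<sz d'.
       block_diag (map M [a..<b]) $$ (block_offset sz a d + i, block_offset sz a d' + j) =
       (if d = d' then M d $$ (i, j) else 0))"
  using assms
proof (induction "b - a" arbitrary: a)
  case 0
  then show ?case by (simp add: block_offset_def)
next
  case (Suc m)
  then have ab: "a < b" by simp
  define B where "B = block_diag (map M [Suc a..<b])"
  have IH: "B \<in> carrier_mat (block_offset sz (Suc a) b) (block_offset sz (Suc a) b) \<and>
    (\<forall>d\<in>{Suc a..<b}. \<forall>d'\<in>{Suc a..<b}. \<forall>i<sz d. \<forall>j<sz d'.
       B $$ (block_offset sz (Suc a) d + i, block_offset sz (Suc a) d' + j) =
       (if d = d' then M d $$ (i, j) else 0))"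
    unfolding B_def using Suc by (intro Suc.hyps(1)) auto
  have Ma: "M a \<in> carrier_mat (sz a) (sz a)"
    using Suc.prems ab by auto
  have split: "block_diag (map M [a..<b]) =
      four_block_mat (M a) (0\<^sub>m (sz a) (block_offset sz (Suc a) b))
        (0\<^sub>m (block_offset sz (Suc a) b) (sz a)) B"
    using Ma IH by (auto simp: upt_conv_Cons[OF ab] B_def[symmetric] Let_def)
  have inner: "block_offset sz (Suc a) d + i < block_offset sz (Suc a) b"
    if "d \<in> {Suc a..<b}" "i < sz d" for d i
    using block_offset_Suc[of "Suc a" d sz] block_offset_mono[of "Suc d" b sz "Suc a"] that by auto
  have shift: "block_offset sz a d = sz a + block_offset sz (Suc a) d" if "d \<in> {Suc a..<b}" for d
    using that block_offset_Cons[of a d sz] by auto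
  note F = index_four_block_diag[OF Ma conjunct1[OF IH]]
  show ?case
  proof (intro conjI ballI allI impI)
    show "block_diag (map M [a..<b]) \<in> carrier_mat (block_offset sz a b) (block_offset sz a b)"
      unfolding split block_offset_Cons[OF ab] using Ma IH by (intro four_block_carrier_mat) auto
  next
    fix d d' i j
    assume d: "d \<in> {a..<b}" and d': "d' \<in> {a..<b}" and i: "i < sz d" and j: "j < sz d'"
    have "d = a \<or> d \<in> {Suc a..<b}" "d' = a \<or> d' \<in> {Suc a..<b}"
      using d d' by auto
    then show "block_diag (map M [a..<b]) $$ (block_offset sz a d + i, block_offset sz a d' + j) =
        (if d = d' then M d $$ (i, j) else 0)"
      using i j IH by (auto simp: split shift add.assoc F inner block_offset_def[of _ a a])
  qed
qed

lemma mult_add_less_mult: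
  fixes x n k d :: nat
  assumes "x < n" "k < d"
  shows "x * d + k < n * d"
proof -
  have "x * d + k < Suc x * d"
    using assms(2) by simp
  also have "\<dots> \<le> n * d"
    using assms(1) by (intro mult_le_mono1) simp
  finally show ?thesis .
qed

lemma dim_kron [simp]:
  "dim_row (kron A B) = dim_row A * dim_row B" "dim_col (kron A B) = dim_col A * dim_col B"
  unfolding kron_def by simp_all

lemma index_kron:
  "i < dim_row A * dim_row B \<Longrightarrow> j < dim_col A * dim_col B \<Longrightarrow>
   kron A B $$ (i, j) =
     A $$ (i div dim_row B, j div dim_col B) * B $$ (i mod dim_row B, j mod dim_col B)"
  unfolding kron_def by simp

lemma kron_one_carrier: "A \<in> carrier_mat n n \<Longrightarrow> kron A (1\<^sub>m d) \<in> carrier_mat (n * d) (n * d)"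
  by auto

lemma index_kron_one:
  assumes "A \<in> carrier_mat n n" "x < n" "x' < n" "k < d" "k' < d"
  shows "kron A (1\<^sub>m d) $$ (x * d + k, x' * d + k') = (if k = k' then A $$ (x, x') else 0)"
proof -
  have "x * d + k < n * d" "x' * d + k' < n * d"
    using assms(2-5) by (simp_all add: mult_add_less_mult)
  then show ?thesis
    using assms by (simp add: index_kron)
qed

lemma kron_one_smult_add:
  assumes "A \<in> carrier_mat n n" "B \<in> carrier_mat n n"
  shows "c \<cdot>\<^sub>m kron A (c' \<cdot>\<^sub>m 1\<^sub>m d) + kron B (1\<^sub>m d) = kron ((c * c') \<cdot>\<^sub>m A + B) (1\<^sub>m d)"
    (is "?L = ?R")
proof (rule eq_matI)
  fix i j
  assume "i < dim_row ?R" "j < dim_col ?R"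
  then have ij: "i < n * d" "j < n * d"
    using assms by auto
  moreover have "0 < d"
    using ij by (cases "d = 0") auto
  ultimately have "i div d < n" "j div d < n" "i mod d < d" "j mod d < d"
    by (auto simp: less_mult_imp_div_less)
  then show "?L $$ (i, j) = ?R $$ (i, j)"
    using ij assms by (simp add: index_kron algebra_simps)
qed (use assms in auto)

lemma smult_add_ghat: "A \<in> ghat n E \<Longrightarrow> B \<in> ghat n E \<Longrightarrow> c \<cdot>\<^sub>m A + B \<in> ghat n E"
  unfolding ghat_def by auto (metis add.right_neutral mult_zero_right)

lemma ncg_tensor_ghat_cI: "ncg_tensor n (ghat n E) d (cI d) = {kron A (1\<^sub>m d) | A. A \<in> ghat n E}"
proof (intro antisym subsetI)
  fix Y
  assume "Y \<in> ncg_tensor n (ghat n E) d (cI d)"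
  then obtain L where Y: "Y = foldr (+) (map (\<lambda>(c, A, B). c \<cdot>\<^sub>m kron A B) L) (0\<^sub>m (n * d) (n * d))"
    and L: "\<forall>(c, A, B)\<in>set L. A \<in> ghat n E \<and> B \<in> cI d"
    unfolding ncg_tensor_def by blast
  from L have "\<exists>A\<in>ghat n E. foldr (+) (map (\<lambda>(c, A, B). c \<cdot>\<^sub>m kron A B) L) (0\<^sub>m (n * d) (n * d)) =
      kron A (1\<^sub>m d)"
  proof (induction L)
    case Nil
    have "0\<^sub>m (n * d) (n * d) = kron (0\<^sub>m n n) (1\<^sub>m d)"
      by (rule eq_matI) (auto simp: index_kron less_mult_imp_div_less)
    moreover have "0\<^sub>m n n \<in> ghat n E"
      unfolding ghat_def by auto
    ultimately show ?case by auto
  next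
    case (Cons t L)
    obtain c A c' where t: "t = (c, A, c' \<cdot>\<^sub>m 1\<^sub>m d)" and A: "A \<in> ghat n E"
      using Cons.prems unfolding cI_def by (cases t) auto
    obtain A' where A': "A' \<in> ghat n E"
      "foldr (+) (map (\<lambda>(c, A, B). c \<cdot>\<^sub>m kron A B) L) (0\<^sub>m (n * d) (n * d)) = kron A' (1\<^sub>m d)"
      using Cons by auto
    have "A \<in> carrier_mat n n" "A' \<in> carrier_mat n n"
      using A A' unfolding ghat_def by auto
    then show ?case
      using A A'
      by (auto simp: t kron_one_smult_add intro!: bexI[of _ "(c * c') \<cdot>\<^sub>m A + A'"] smult_add_ghat)
  qed
  then show "Y \<in> {kron A (1\<^sub>m d) | A. A \<in> ghat n E}"
    using Y by auto
next
  fix Y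
  assume "Y \<in> {kron A (1\<^sub>m d) | A. A \<in> ghat n E}"
  then obtain A where A: "A \<in> ghat n E" "Y = kron A (1\<^sub>m d)"
    by blast
  then have "A \<in> carrier_mat n n"
    unfolding ghat_def by auto
  then have "Y = foldr (+) (map (\<lambda>(c, A, B). c \<cdot>\<^sub>m kron A B) [(1, A, 1\<^sub>m d)]) (0\<^sub>m (n * d) (n * d))"
    using A by (auto intro!: eq_matI)
  moreover have "1\<^sub>m d \<in> cI d"
    unfolding cI_def by (intro CollectI exI[of _ 1]) (auto intro!: eq_matI)
  ultimately show "Y \<in> ncg_tensor n (ghat n E) d (cI d)"
    unfolding ncg_tensor_def using A by fastforce
qed

section \<open>Coordinates and blocks on the direct sum\<close>

(* Coordinate of e_x (x) e_k in the summand C^(n d) (x) C^d, for g = (d, x) and k < d: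
   summands are ordered by d, and inside a summand the order is that of kron. *)
definition ncg_index :: "(nat \<Rightarrow> nat) \<Rightarrow> nat \<times> nat \<Rightarrow> nat \<Rightarrow> nat" where
  "ncg_index n g k = block_offset (\<lambda>d. n d * d) 1 (fst g) + (snd g * fst g + k)"

definition ncg_basis :: "nat \<Rightarrow> (nat \<Rightarrow> nat) \<Rightarrow> ((nat \<times> nat) \<times> nat) set" where
  "ncg_basis r n = Sigma (vtx r n) (\<lambda>g. {..<fst g})"

lemma ncg_dim_block_offset: "ncg_dim r n = block_offset (\<lambda>d. n d * d) 1 (Suc r)"
  unfolding ncg_dim_def block_offset_def by (simp add: atLeastLessThanSuc_atLeastAtMost)

lemma finite_vtx: "finite (vtx r n)"
proof -
  have "vtx r n = Sigma {1..r} (\<lambda>d. {..<n d})"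
    unfolding vtx_def by auto
  then show ?thesis by simp
qed

lemma vtxD: "g \<in> vtx r n \<Longrightarrow> 1 \<le> fst g \<and> fst g \<le> r \<and> snd g < n (fst g)"
  unfolding vtx_def by auto

lemma ncg_index_bounds:
  assumes "g \<in> vtx r n" "k < fst g"
  shows "block_offset (\<lambda>d. n d * d) 1 (fst g) \<le> ncg_index n g k"
    and "ncg_index n g k < block_offset (\<lambda>d. n d * d) 1 (Suc (fst g))"
  using assms vtxD[OF assms(1)] mult_add_less_mult[of "snd g" "n (fst g)" k "fst g"]
  by (auto simp: ncg_index_def block_offset_Suc)

lemma ncg_index_less: "g \<in> vtx r n \<Longrightarrow> k < fst g \<Longrightarrow> ncg_index n g k < ncg_dim r n"
  using ncg_index_bounds(2) block_offset_mono[of "Suc (fst g)" "Suc r"] vtxD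
  unfolding ncg_dim_block_offset by (meson Suc_le_mono order_less_le_trans)

lemma ncg_index_eq_iff:
  assumes "g \<in> vtx r n" "k < fst g" "g' \<in> vtx r n" "k' < fst g'"
  shows "ncg_index n g k = ncg_index n g' k' \<longleftrightarrow> g = g' \<and> k = k'"
proof
  assume eq: "ncg_index n g k = ncg_index n g' k'"
  have "fst g = fst g'"
  proof (rule ccontr)
    assume "fst g \<noteq> fst g'"
    then have "Suc (fst g) \<le> fst g' \<or> Suc (fst g') \<le> fst g"
      by linarith
    then show False
    proof
      assume "Suc (fst g) \<le> fst g'"
      from block_offset_mono[OF this, of "\<lambda>d. n d * d" 1] show False
        using eq ncg_index_bounds[OF assms(1,2)] ncg_index_bounds[OF assms(3,4)] by linarith
    next
      assume "Suc (fst g') \<le> fst g"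
      from block_offset_mono[OF this, of "\<lambda>d. n d * d" 1] show False
        using eq ncg_index_bounds[OF assms(1,2)] ncg_index_bounds[OF assms(3,4)] by linarith
    qed
  qed
  moreover have "snd g = snd g' \<and> k = k'"
  proof -
    have "snd g * fst g + k = snd g' * fst g + k'"
      using eq \<open>fst g = fst g'\<close> by (simp add: ncg_index_def)
    moreover have "(snd g * fst g + k) div fst g = snd g" "(snd g * fst g + k) mod fst g = k"
      "(snd g' * fst g + k') div fst g = snd g'" "(snd g' * fst g + k') mod fst g = k'"
      using assms(2,4) \<open>fst g = fst g'\<close> by simp_all
    ultimately show ?thesis
      by metis
  qed
  ultimately show "g = g' \<and> k = k'"
    by (simp add: prod_eq_iff)
qed simp

lemma ncg_index_cases:
  assumes "p < ncg_dim r n"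
  obtains g k where "g \<in> vtx r n" "k < fst g" "p = ncg_index n g k"
proof -
  obtain d i where d: "d \<in> {1..<Suc r}" and i: "i < n d * d"
    and p: "p = block_offset (\<lambda>d. n d * d) 1 d + i"
    using assms unfolding ncg_dim_block_offset by (elim block_offset_cases)
  have "(d, i div d) \<in> vtx r n"
    using d i by (auto simp: vtx_def less_mult_imp_div_less)
  moreover have "i mod d < d"
    using d by simp
  moreover have "p = ncg_index n (d, i div d) (i mod d)"
    by (simp add: ncg_index_def p)
  ultimately show ?thesis
    using that by simp
qed

lemma bij_betw_ncg_index: "bij_betw (\<lambda>(g, k). ncg_index n g k) (ncg_basis r n) {..<ncg_dim r n}"
proof (rule bij_betw_imageI)
  show "inj_on (\<lambda>(g, k). ncg_index n g k) (ncg_basis r n)"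
    by (auto intro!: inj_onI simp: ncg_basis_def ncg_index_eq_iff)
  show "(\<lambda>(g, k). ncg_index n g k) ` ncg_basis r n = {..<ncg_dim r n}"
    by (auto simp: ncg_basis_def ncg_index_less image_iff elim!: ncg_index_cases)
qed

lemma sum_ncg_dim:
  "(\<Sum>p<ncg_dim r n. f p) = (\<Sum>g\<in>vtx r n. \<Sum>k<fst g. f (ncg_index n g k))"
proof -
  have "(\<Sum>p<ncg_dim r n. f p) = (\<Sum>(g, k)\<in>ncg_basis r n. f (ncg_index n g k))"
    using sum.reindex_bij_betw[OF bij_betw_ncg_index, of f] by (simp add: case_prod_unfold)
  also have "\<dots> = (\<Sum>g\<in>vtx r n. \<Sum>k<fst g. f (ncg_index n g k))"
    unfolding ncg_basis_def using finite_vtx by (subst sum.Sigma) auto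
  finally show ?thesis .
qed

definition ncg_coord :: "nat \<Rightarrow> (nat \<Rightarrow> nat) \<Rightarrow> nat \<Rightarrow> (nat \<times> nat) \<times> nat" where
  "ncg_coord r n = the_inv_into (ncg_basis r n) (\<lambda>(g, k). ncg_index n g k)"

lemma ncg_coord_ncg_index: "g \<in> vtx r n \<Longrightarrow> k < fst g \<Longrightarrow> ncg_coord r n (ncg_index n g k) = (g, k)"
  unfolding ncg_coord_def
  using the_inv_into_f_f[OF bij_betw_imp_inj_on[OF bij_betw_ncg_index], of "(g, k)"]
  by (simp add: ncg_basis_def)

definition ncg_block :: "(nat \<Rightarrow> nat) \<Rightarrow> (nat \<Rightarrow> nat) \<Rightarrow> complex mat \<Rightarrow> nat \<times> nat \<Rightarrow> nat \<times> nat \<Rightarrow> complex mat"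
  where "ncg_block n1 n2 X g h = mat (fst g) (fst h) (\<lambda>(k, l). X $$ (ncg_index n1 g k, ncg_index n2 h l))"

definition ncg_block_mat ::
  "nat \<Rightarrow> (nat \<Rightarrow> nat) \<Rightarrow> (nat \<Rightarrow> nat) \<Rightarrow> (nat \<times> nat \<Rightarrow> nat \<times> nat \<Rightarrow> complex mat) \<Rightarrow> complex mat"
  where "ncg_block_mat r n1 n2 B = mat (ncg_dim r n1) (ncg_dim r n2)
    (\<lambda>(p, q). case (ncg_coord r n1 p, ncg_coord r n2 q) of ((g, k), (h, l)) \<Rightarrow> B g h $$ (k, l))"

lemma ncg_block_carrier [simp]: "ncg_block n1 n2 X g h \<in> carrier_mat (fst g) (fst h)"
  unfolding ncg_block_def by simp

lemma dim_ncg_block [simp]: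
  "dim_row (ncg_block n1 n2 X g h) = fst g" "dim_col (ncg_block n1 n2 X g h) = fst h"
  unfolding ncg_block_def by simp_all

lemma index_ncg_block [simp]:
  "k < fst g \<Longrightarrow> l < fst h \<Longrightarrow> ncg_block n1 n2 X g h $$ (k, l) = X $$ (ncg_index n1 g k, ncg_index n2 h l)"
  unfolding ncg_block_def by simp

lemma ncg_block_mat_carrier: "ncg_block_mat r n1 n2 B \<in> carrier_mat (ncg_dim r n1) (ncg_dim r n2)"
  unfolding ncg_block_mat_def by simp

lemma ncg_block_ncg_block_mat:
  assumes "g \<in> vtx r n1" "h \<in> vtx r n2" "B g h \<in> carrier_mat (fst g) (fst h)"
  shows "ncg_block n1 n2 (ncg_block_mat r n1 n2 B) g h = B g h"
  using assms by (auto intro!: eq_matI simp: ncg_block_mat_def ncg_index_less ncg_coord_ncg_index)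

lemma ncg_block_eqI:
  assumes "A \<in> carrier_mat (ncg_dim r n1) (ncg_dim r n2)" "B \<in> carrier_mat (ncg_dim r n1) (ncg_dim r n2)"
    and "\<And>g h. g \<in> vtx r n1 \<Longrightarrow> h \<in> vtx r n2 \<Longrightarrow> ncg_block n1 n2 A g h = ncg_block n1 n2 B g h"
  shows "A = B"
proof (rule eq_matI)
  fix p q
  assume "p < dim_row B" "q < dim_col B"
  then obtain g k h l where "g \<in> vtx r n1" "k < fst g" "p = ncg_index n1 g k"
    and "h \<in> vtx r n2" "l < fst h" "q = ncg_index n2 h l"
    using assms(2) by (auto elim!: ncg_index_cases)
  then show "A $$ (p, q) = B $$ (p, q)"
    using assms(3) index_ncg_block by metis
qed (use assms in auto)

lemma ncg_block_one:
  assumes "g \<in> vtx r n" "g' \<in> vtx r n"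
  shows "ncg_block n n (1\<^sub>m (ncg_dim r n)) g g' = (if g = g' then 1\<^sub>m (fst g) else 0\<^sub>m (fst g) (fst g'))"
  using assms by (auto intro!: eq_matI simp: ncg_index_less ncg_index_eq_iff)

lemma index_ncg_block_adjoint_mult_mult:
  assumes A: "A \<in> carrier_mat (ncg_dim r n) (ncg_dim r n1)"
    and X: "X \<in> carrier_mat (ncg_dim r n) (ncg_dim r n)"
    and B: "B \<in> carrier_mat (ncg_dim r n) (ncg_dim r n2)"
    and h: "h \<in> vtx r n1" "l < fst h" and h': "h' \<in> vtx r n2" "l' < fst h'"
  shows "ncg_block n1 n2 (mat_adjoint A * X * B) h h' $$ (l, l') =
    (\<Sum>g\<in>vtx r n. \<Sum>g'\<in>vtx r n.
      (mat_adjoint (ncg_block n n1 A g h) * ncg_block n n X g g' * ncg_block n n2 B g' h') $$ (l, l'))"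
proof -
  define F where "F g k g' k' = cnj (A $$ (ncg_index n g k, ncg_index n1 h l)) *
    X $$ (ncg_index n g k, ncg_index n g' k') * B $$ (ncg_index n g' k', ncg_index n2 h' l')" for g k g' k'
  have "ncg_block n1 n2 (mat_adjoint A * X * B) h h' $$ (l, l') =
      (\<Sum>g'\<in>vtx r n. \<Sum>k'<fst g'. \<Sum>g\<in>vtx r n. \<Sum>k<fst g. F g k g' k')"
    using h h' by (simp add: index_adjoint_mult_mult[OF A X B] ncg_index_less sum_ncg_dim F_def)
  also have "\<dots> = (\<Sum>g'\<in>vtx r n. \<Sum>g\<in>vtx r n. \<Sum>k'<fst g'. \<Sum>k<fst g. F g k g' k')"
    by (intro sum.cong refl sum.swap)
  also have "\<dots> = (\<Sum>g\<in>vtx r n. \<Sum>g'\<in>vtx r n. \<Sum>k'<fst g'. \<Sum>k<fst g. F g k g' k')"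
    by (rule sum.swap)
  also have "\<dots> = (\<Sum>g\<in>vtx r n. \<Sum>g'\<in>vtx r n.
      (mat_adjoint (ncg_block n n1 A g h) * ncg_block n n X g g' * ncg_block n n2 B g' h') $$ (l, l'))"
    unfolding index_adjoint_mult_mult[OF ncg_block_carrier ncg_block_carrier ncg_block_carrier h(2) h'(2)]
    using h h' by (intro sum.cong refl) (simp add: F_def)
  finally show ?thesis .
qed

section \<open>Block form of the noncommutative graphs\<close>

lemma block_diag_kron_one:
  assumes A: "\<forall>d\<in>{1..r}. A d \<in> carrier_mat (n d) (n d)"
  defines "D \<equiv> block_diag (map (\<lambda>d. kron (A d) (1\<^sub>m d)) [1..<Suc r])"
  shows "D \<in> carrier_mat (ncg_dim r n) (ncg_dim r n)"
    and "g \<in> vtx r n \<Longrightarrow> g' \<in> vtx r n \<Longrightarrow> ncg_block n n D g g' =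
      (if fst g = fst g' then A (fst g) $$ (snd g, snd g') \<cdot>\<^sub>m 1\<^sub>m (fst g) else 0\<^sub>m (fst g) (fst g'))"
proof -
  have "\<forall>d\<in>{1..<Suc r}. kron (A d) (1\<^sub>m d) \<in> carrier_mat (n d * d) (n d * d)"
    using A kron_one_carrier by auto
  note D = block_diag_upt[OF this, folded D_def ncg_dim_block_offset]
  show "D \<in> carrier_mat (ncg_dim r n) (ncg_dim r n)"
    using D by blast
  assume g: "g \<in> vtx r n" and g': "g' \<in> vtx r n"
  show "ncg_block n n D g g' =
      (if fst g = fst g' then A (fst g) $$ (snd g, snd g') \<cdot>\<^sub>m 1\<^sub>m (fst g) else 0\<^sub>m (fst g) (fst g'))"
    (is "_ = ?R")
  proof (rule eq_matI)
    fix k k'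
    assume "k < dim_row ?R" "k' < dim_col ?R"
    then have k: "k < fst g" "k' < fst g'"
      by (auto split: if_splits)
    have "D $$ (ncg_index n g k, ncg_index n g' k') =
        (if fst g = fst g'
         then kron (A (fst g)) (1\<^sub>m (fst g)) $$ (snd g * fst g + k, snd g' * fst g' + k') else 0)"
      using D vtxD[OF g] vtxD[OF g'] k mult_add_less_mult unfolding ncg_index_def by auto
    then show "ncg_block n n D g g' $$ (k, k') = ?R $$ (k, k')"
      using index_kron_one[of "A (fst g)" "n (fst g)" "snd g" "snd g'" k "fst g" k'] A
        vtxD[OF g] vtxD[OF g'] k
      by auto
  qed auto
qed

lemma simeq_refl: "simeq E g g"
  unfolding simeq_def by simp

lemma mem_ncg_S_iff_kron:
  "X \<in> ncg_S r n E \<longleftrightarrow>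
    (\<exists>A. (\<forall>d\<in>{1..r}. A d \<in> ghat (n d) (E d)) \<and> X = block_diag (map (\<lambda>d. kron (A d) (1\<^sub>m d)) [1..<Suc r]))"
proof
  assume "X \<in> ncg_S r n E"
  then obtain M where X: "X = block_diag (map M [1..<Suc r])"
    and M: "\<forall>d\<in>{1..r}. M d \<in> ncg_tensor (n d) (ghat (n d) (E d)) d (cI d)"
    unfolding ncg_S_def ncg_dsum_def by auto
  then have "\<forall>d\<in>{1..r}. \<exists>A. A \<in> ghat (n d) (E d) \<and> M d = kron A (1\<^sub>m d)"
    unfolding ncg_tensor_ghat_cI by blast
  then obtain A where A: "\<forall>d\<in>{1..r}. A d \<in> ghat (n d) (E d) \<and> M d = kron (A d) (1\<^sub>m d)"
    by (rule bchoice[elim_format]) blast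
  then have "X = block_diag (map (\<lambda>d. kron (A d) (1\<^sub>m d)) [1..<Suc r])"
    unfolding X by (intro arg_cong[where f = block_diag] map_cong) auto
  with A show "\<exists>A. (\<forall>d\<in>{1..r}. A d \<in> ghat (n d) (E d)) \<and>
      X = block_diag (map (\<lambda>d. kron (A d) (1\<^sub>m d)) [1..<Suc r])"
    by blast
next
  assume "\<exists>A. (\<forall>d\<in>{1..r}. A d \<in> ghat (n d) (E d)) \<and>
    X = block_diag (map (\<lambda>d. kron (A d) (1\<^sub>m d)) [1..<Suc r])"
  then obtain A where "\<forall>d\<in>{1..r}. kron (A d) (1\<^sub>m d) \<in> ncg_tensor (n d) (ghat (n d) (E d)) d (cI d)"
    and "X = block_diag (map (\<lambda>d. kron (A d) (1\<^sub>m d)) [1..<Suc r])"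
    unfolding ncg_tensor_ghat_cI by blast
  then show "X \<in> ncg_S r n E"
    unfolding ncg_S_def ncg_dsum_def by (intro CollectI exI[of _ "\<lambda>d. kron (A d) (1\<^sub>m d)"]) simp
qed

lemma mem_ncg_S_iff:
  "X \<in> ncg_S r n E \<longleftrightarrow> X \<in> carrier_mat (ncg_dim r n) (ncg_dim r n) \<and>
    (\<exists>c. \<forall>g\<in>vtx r n. \<forall>g'\<in>vtx r n. ncg_block n n X g g' =
       (if simeq E g g' then c g g' \<cdot>\<^sub>m 1\<^sub>m (fst g) else 0\<^sub>m (fst g) (fst g')))"
  (is "_ \<longleftrightarrow> _ \<and> (\<exists>c. \<forall>g\<in>_. \<forall>g'\<in>_. ?block X g g' c)")
proof
  assume "X \<in> ncg_S r n E"
  then obtain A where A: "\<forall>d\<in>{1..r}. A d \<in> ghat (n d) (E d)"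
    and X: "X = block_diag (map (\<lambda>d. kron (A d) (1\<^sub>m d)) [1..<Suc r])"
    unfolding mem_ncg_S_iff_kron by blast
  have Ac: "\<forall>d\<in>{1..r}. A d \<in> carrier_mat (n d) (n d)"
    using A unfolding ghat_def by blast
  have "?block X g g' (\<lambda>g g'. A (fst g) $$ (snd g, snd g'))" if "g \<in> vtx r n" "g' \<in> vtx r n" for g g'
  proof (cases "fst g = fst g' \<and> \<not> simeq E g g'")
    case True
    then have "snd g \<noteq> snd g'" "\<not> E (fst g) (snd g) (snd g')"
      by (auto simp: simeq_def)
    moreover have "A (fst g) \<in> ghat (n (fst g)) (E (fst g))"
      using A vtxD[OF that(1)] by auto
    ultimately have "A (fst g) $$ (snd g, snd g') = 0"
      using vtxD[OF that(1)] vtxD[OF that(2)] True unfolding ghat_def by auto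
    then show ?thesis
      using True block_diag_kron_one(2)[OF Ac that, folded X] by auto
  next
    case False
    then show ?thesis
      using block_diag_kron_one(2)[OF Ac that, folded X] by (auto simp: simeq_def)
  qed
  then show "X \<in> carrier_mat (ncg_dim r n) (ncg_dim r n) \<and> (\<exists>c. \<forall>g\<in>vtx r n. \<forall>g'\<in>vtx r n. ?block X g g' c)"
    using block_diag_kron_one(1)[OF Ac, folded X] by auto
next
  assume "X \<in> carrier_mat (ncg_dim r n) (ncg_dim r n) \<and> (\<exists>c. \<forall>g\<in>vtx r n. \<forall>g'\<in>vtx r n. ?block X g g' c)"
  then obtain c where X: "X \<in> carrier_mat (ncg_dim r n) (ncg_dim r n)"
    and c: "\<forall>g\<in>vtx r n. \<forall>g'\<in>vtx r n. ?block X g g' c"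
    by blast
  define A where
    "A d = mat (n d) (n d) (\<lambda>(x, x'). if simeq E (d, x) (d, x') then c (d, x) (d, x') else 0)" for d
  have Ac: "\<forall>d\<in>{1..r}. A d \<in> carrier_mat (n d) (n d)"
    unfolding A_def by simp
  have "X = block_diag (map (\<lambda>d. kron (A d) (1\<^sub>m d)) [1..<Suc r])"
  proof (rule ncg_block_eqI[OF X block_diag_kron_one(1)[OF Ac]])
    fix g g'
    assume g: "g \<in> vtx r n" and g': "g' \<in> vtx r n"
    have "fst g = fst g' \<Longrightarrow> A (fst g) $$ (snd g, snd g') = (if simeq E g g' then c g g' else 0)"
      using vtxD[OF g] vtxD[OF g'] by (cases g) (simp add: A_def)
    moreover have "simeq E g g' \<Longrightarrow> fst g = fst g'"
      by (simp add: simeq_def)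
    ultimately show "ncg_block n n X g g' =
        ncg_block n n (block_diag (map (\<lambda>d. kron (A d) (1\<^sub>m d)) [1..<Suc r])) g g'"
      unfolding block_diag_kron_one(2)[OF Ac g g'] using c g g' by auto
  qed
  moreover have "A d \<in> ghat (n d) (E d)" for d
    unfolding ghat_def A_def simeq_def by auto
  ultimately show "X \<in> ncg_S r n E"
    unfolding mem_ncg_S_iff_kron by blast
qed

section \<open>From vertex isometries to a cohomomorphism\<close>

definition vertex_isometries ::
  "nat \<Rightarrow> (nat \<Rightarrow> nat) \<Rightarrow> (nat \<Rightarrow> nat \<Rightarrow> nat \<Rightarrow> bool) \<Rightarrow> (nat \<Rightarrow> nat) \<Rightarrow> (nat \<Rightarrow> nat \<Rightarrow> nat \<Rightarrow> bool) \<Rightarrow>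
    (nat \<times> nat \<Rightarrow> nat \<times> nat) \<Rightarrow> (nat \<times> nat \<Rightarrow> complex mat) \<Rightarrow> bool"
  where "vertex_isometries r nH EH nG EG \<phi> U \<longleftrightarrow>
    (\<forall>h\<in>vtx r nH. \<phi> h \<in> vtx r nG) \<and>
    (\<forall>h\<in>vtx r nH. U h \<in> carrier_mat (fst (\<phi> h)) (fst h) \<and> mat_adjoint (U h) * U h = 1\<^sub>m (fst h)) \<and>
    (\<forall>h\<in>vtx r nH. \<forall>h'\<in>vtx r nH.
       (\<not> simeq EH h h' \<longrightarrow> \<not> simeq EG (\<phi> h) (\<phi> h') \<or> mat_adjoint (U h) * U h' = 0\<^sub>m (fst h) (fst h')) \<and>
       (simeq EH h h' \<and> simeq EG (\<phi> h) (\<phi> h') \<longrightarrow> (\<exists>c. mat_adjoint (U h) * U h' = c \<cdot>\<^sub>m 1\<^sub>m (fst h))))"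

definition vertex_kraus ::
  "nat \<Rightarrow> (nat \<Rightarrow> nat) \<Rightarrow> (nat \<Rightarrow> nat) \<Rightarrow> (nat \<times> nat \<Rightarrow> nat \<times> nat) \<Rightarrow> (nat \<times> nat \<Rightarrow> complex mat) \<Rightarrow>
    nat \<times> nat \<Rightarrow> complex mat"
  where "vertex_kraus r nG nH \<phi> U h =
    ncg_block_mat r nG nH (\<lambda>g h'. if g = \<phi> h \<and> h' = h then U h else 0\<^sub>m (fst g) (fst h'))"

lemma vertex_kraus_carrier: "vertex_kraus r nG nH \<phi> U h \<in> carrier_mat (ncg_dim r nG) (ncg_dim r nH)"
  unfolding vertex_kraus_def by (rule ncg_block_mat_carrier)

lemma ncg_block_vertex_kraus:
  assumes "U h \<in> carrier_mat (fst (\<phi> h)) (fst h)" "g \<in> vtx r nG" "h' \<in> vtx r nH"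
  shows "ncg_block nG nH (vertex_kraus r nG nH \<phi> U h) g h' =
    (if g = \<phi> h \<and> h' = h then U h else 0\<^sub>m (fst g) (fst h'))"
  unfolding vertex_kraus_def using assms by (intro ncg_block_ncg_block_mat) auto

lemma ncg_block_vertex_kraus_adjoint_mult_mult:
  assumes \<phi>: "\<phi> h1 \<in> vtx r nG" "\<phi> h2 \<in> vtx r nG"
    and U: "U h1 \<in> carrier_mat (fst (\<phi> h1)) (fst h1)" "U h2 \<in> carrier_mat (fst (\<phi> h2)) (fst h2)"
    and X: "X \<in> carrier_mat (ncg_dim r nG) (ncg_dim r nG)"
    and h: "h \<in> vtx r nH" "h' \<in> vtx r nH"
  shows "ncg_block nH nH (mat_adjoint (vertex_kraus r nG nH \<phi> U h1) * X * vertex_kraus r nG nH \<phi> U h2) h h' =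
    (if h = h1 \<and> h' = h2 then mat_adjoint (U h1) * ncg_block nG nG X (\<phi> h1) (\<phi> h2) * U h2
     else 0\<^sub>m (fst h) (fst h'))"
    (is "?L = ?R")
proof (rule eq_matI)
  fix l l'
  assume "l < dim_row ?R" "l' < dim_col ?R"
  then have l: "l < fst h" "l' < fst h'"
    using U by (auto split: if_splits)
  let ?K = "ncg_block nG nH (vertex_kraus r nG nH \<phi> U h1)"
  let ?K' = "ncg_block nG nH (vertex_kraus r nG nH \<phi> U h2)"
  have "?L $$ (l, l') =
      (\<Sum>g\<in>vtx r nG. \<Sum>g'\<in>vtx r nG. (mat_adjoint (?K g h) * ncg_block nG nG X g g' * ?K' g' h') $$ (l, l'))"
    using X h l by (intro index_ncg_block_adjoint_mult_mult vertex_kraus_carrier)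
  also have "\<dots> = (mat_adjoint (?K (\<phi> h1) h) * ncg_block nG nG X (\<phi> h1) (\<phi> h2) * ?K' (\<phi> h2) h') $$ (l, l')"
    using \<phi> U h l by (intro sum_sum_eq_single finite_vtx) (auto simp: ncg_block_vertex_kraus)
  also have "\<dots> = ?R $$ (l, l')"
    using \<phi> U h l by (auto simp: ncg_block_vertex_kraus)
  finally show "?L $$ (l, l') = ?R $$ (l, l')" .
qed (use U in auto)

lemma sum_vertex_kraus_adjoint_mult:
  assumes hs: "distinct hs" "set hs = vtx r nH" and iso: "vertex_isometries r nH EH nG EG \<phi> U"
  shows "foldr (+) (map (\<lambda>E. mat_adjoint E * E) (map (vertex_kraus r nG nH \<phi> U) hs))
      (0\<^sub>m (ncg_dim r nH) (ncg_dim r nH)) = 1\<^sub>m (ncg_dim r nH)"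
    (is "?S = _")
proof -
  have \<phi>: "\<forall>h\<in>vtx r nH. \<phi> h \<in> vtx r nG"
    and U: "\<forall>h\<in>vtx r nH. U h \<in> carrier_mat (fst (\<phi> h)) (fst h) \<and> mat_adjoint (U h) * U h = 1\<^sub>m (fst h)"
    using iso unfolding vertex_isometries_def by blast+
  let ?K = "vertex_kraus r nG nH \<phi> U"
  have KK: "mat_adjoint (?K h0) * ?K h0 = mat_adjoint (?K h0) * 1\<^sub>m (ncg_dim r nG) * ?K h0" for h0
    by (simp add: right_mult_one_mat[OF mat_adjoint_carrier[OF vertex_kraus_carrier]])
  have UU: "mat_adjoint (U h0) * 1\<^sub>m (fst (\<phi> h0)) * U h0 = 1\<^sub>m (fst h0)" if "h0 \<in> vtx r nH" for h0
  proof -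
    have "U h0 \<in> carrier_mat (fst (\<phi> h0)) (fst h0)" "mat_adjoint (U h0) * U h0 = 1\<^sub>m (fst h0)"
      using U that by auto
    then show ?thesis
      using right_mult_one_mat[OF mat_adjoint_carrier] by metis
  qed
  have "\<forall>E\<in>set (map ?K hs). mat_adjoint E * E \<in> carrier_mat (ncg_dim r nH) (ncg_dim r nH)"
    using mult_carrier_mat[OF mat_adjoint_carrier vertex_kraus_carrier, OF vertex_kraus_carrier] by auto
  note S = foldr_add_mat[OF this]
  show ?thesis
  proof (rule ncg_block_eqI[OF S(1) one_carrier_mat])
    fix h h'
    assume h: "h \<in> vtx r nH" "h' \<in> vtx r nH"
    show "ncg_block nH nH ?S h h' = ncg_block nH nH (1\<^sub>m (ncg_dim r nH)) h h'" (is "?L = ?R")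
    proof (rule eq_matI)
      fix l l'
      assume "l < dim_row ?R" "l' < dim_col ?R"
      then have l: "l < fst h" "l' < fst h'"
        by simp_all
      have "?L $$ (l, l') =
          (\<Sum>E\<leftarrow>map ?K hs. (mat_adjoint E * E) $$ (ncg_index nH h l, ncg_index nH h' l'))"
        unfolding index_ncg_block[OF l] using h l by (intro S(2) ncg_index_less)
      also have "\<dots> = (\<Sum>h0\<in>vtx r nH.
          ncg_block nH nH (mat_adjoint (?K h0) * 1\<^sub>m (ncg_dim r nG) * ?K h0) h h' $$ (l, l'))"
        using l hs by (simp add: sum_list_distinct_conv_sum_set KK)
      also have "\<dots> = (\<Sum>h0\<in>vtx r nH. if h0 = h then (if h' = h then 1\<^sub>m (fst h) $$ (l, l') else 0) else 0)"
        using \<phi> U h l by (intro sum.cong refl)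
          (simp add: ncg_block_vertex_kraus_adjoint_mult_mult ncg_block_one UU)
      also have "\<dots> = ?R $$ (l, l')"
        using h l finite_vtx by (simp add: ncg_block_one sum.delta)
      finally show "?L $$ (l, l') = ?R $$ (l, l')" .
    qed simp_all
  qed
qed

lemma vertex_isometries_compression:
  assumes iso: "vertex_isometries r nH EH nG EG \<phi> U"
    and X: "X \<in> ncg_S r nG EG" and h1: "h1 \<in> vtx r nH" and h2: "h2 \<in> vtx r nH"
  shows "\<exists>c. mat_adjoint (U h1) * ncg_block nG nG X (\<phi> h1) (\<phi> h2) * U h2 =
    (if simeq EH h1 h2 then c \<cdot>\<^sub>m 1\<^sub>m (fst h1) else 0\<^sub>m (fst h1) (fst h2))"
proof -
  obtain cX where cX: "\<forall>g\<in>vtx r nG. \<forall>g'\<in>vtx r nG. ncg_block nG nG X g g' =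
      (if simeq EG g g' then cX g g' \<cdot>\<^sub>m 1\<^sub>m (fst g) else 0\<^sub>m (fst g) (fst g'))"
    using X unfolding mem_ncg_S_iff by blast
  have \<phi>: "\<phi> h1 \<in> vtx r nG" "\<phi> h2 \<in> vtx r nG"
    and U1: "U h1 \<in> carrier_mat (fst (\<phi> h1)) (fst h1)" and U2: "U h2 \<in> carrier_mat (fst (\<phi> h2)) (fst h2)"
    and orth: "\<not> simeq EH h1 h2 \<Longrightarrow>
      \<not> simeq EG (\<phi> h1) (\<phi> h2) \<or> mat_adjoint (U h1) * U h2 = 0\<^sub>m (fst h1) (fst h2)"
    and scalar: "simeq EH h1 h2 \<Longrightarrow> simeq EG (\<phi> h1) (\<phi> h2) \<Longrightarrow>
      \<exists>c. mat_adjoint (U h1) * U h2 = c \<cdot>\<^sub>m 1\<^sub>m (fst h1)"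
    using iso h1 h2 unfolding vertex_isometries_def by blast+
  show ?thesis
  proof (cases "simeq EG (\<phi> h1) (\<phi> h2)")
    case True
    then have "fst (\<phi> h1) = fst (\<phi> h2)"
      by (simp add: simeq_def)
    then have XU: "mat_adjoint (U h1) * ncg_block nG nG X (\<phi> h1) (\<phi> h2) * U h2 =
        cX (\<phi> h1) (\<phi> h2) \<cdot>\<^sub>m (mat_adjoint (U h1) * U h2)"
      using True cX \<phi> U2 mult_smult_one_mult[OF mat_adjoint_carrier[OF U1]] by simp
    show ?thesis
    proof (cases "simeq EH h1 h2")
      case sH: True
      then obtain c where "mat_adjoint (U h1) * U h2 = c \<cdot>\<^sub>m 1\<^sub>m (fst h1)"
        using scalar True by blast
      with XU sH show ?thesis
        by (intro exI[of _ "cX (\<phi> h1) (\<phi> h2) * c"]) (auto intro!: eq_matI)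
    next
      case sH: False
      then show ?thesis
        using XU orth True by auto
    qed
  next
    case False
    then have "mat_adjoint (U h1) * ncg_block nG nG X (\<phi> h1) (\<phi> h2) * U h2 = 0\<^sub>m (fst h1) (fst h2)"
      using cX \<phi> U1 U2 mat_adjoint_carrier[OF U1] by simp
    then show ?thesis
      by (intro exI[of _ 0]) (auto simp: simeq_def)
  qed
qed

lemma vertex_kraus_adjoint_mult_mult_mem_ncg_S:
  assumes iso: "vertex_isometries r nH EH nG EG \<phi> U"
    and X: "X \<in> ncg_S r nG EG" and h1: "h1 \<in> vtx r nH" and h2: "h2 \<in> vtx r nH"
  shows "mat_adjoint (vertex_kraus r nG nH \<phi> U h1) * X * vertex_kraus r nG nH \<phi> U h2 \<in> ncg_S r nH EH"
proof -
  have Xc: "X \<in> carrier_mat (ncg_dim r nG) (ncg_dim r nG)"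
    using X unfolding mem_ncg_S_iff by blast
  have \<phi>: "\<forall>h\<in>vtx r nH. \<phi> h \<in> vtx r nG"
    and U: "\<forall>h\<in>vtx r nH. U h \<in> carrier_mat (fst (\<phi> h)) (fst h)"
    using iso unfolding vertex_isometries_def by blast+
  obtain c where c: "mat_adjoint (U h1) * ncg_block nG nG X (\<phi> h1) (\<phi> h2) * U h2 =
      (if simeq EH h1 h2 then c \<cdot>\<^sub>m 1\<^sub>m (fst h1) else 0\<^sub>m (fst h1) (fst h2))"
    using vertex_isometries_compression[OF iso X h1 h2] by blast
  have "mat_adjoint (vertex_kraus r nG nH \<phi> U h1) * X * vertex_kraus r nG nH \<phi> U h2
      \<in> carrier_mat (ncg_dim r nH) (ncg_dim r nH)"
    using mat_adjoint_carrier[OF vertex_kraus_carrier] vertex_kraus_carrier Xc by (meson mult_carrier_mat)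
  then show ?thesis
    unfolding mem_ncg_S_iff using \<phi> U h1 h2 Xc c
    by (intro conjI exI[of _ "\<lambda>h h'. if h = h1 \<and> h' = h2 then c else 0"] ballI)
      (auto simp: ncg_block_vertex_kraus_adjoint_mult_mult simeq_def)
qed

lemma cohom_ncg_S_if_vertex_isometries:
  assumes "vertex_isometries r nH EH nG EG \<phi> U"
  shows "cohom (ncg_S r nH EH) (ncg_dim r nH) (ncg_S r nG EG) (ncg_dim r nG)"
proof -
  obtain hs where hs: "distinct hs" "set hs = vtx r nH"
    using finite_distinct_list[OF finite_vtx] by blast
  show ?thesis
    unfolding cohom_def
  proof (intro exI[of _ "map (vertex_kraus r nG nH \<phi> U) hs"] conjI ballI)
    show "foldr (+) (map (\<lambda>E. mat_adjoint E * E) (map (vertex_kraus r nG nH \<phi> U) hs))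
        (0\<^sub>m (ncg_dim r nH) (ncg_dim r nH)) = 1\<^sub>m (ncg_dim r nH)"
      by (rule sum_vertex_kraus_adjoint_mult[OF hs assms])
  qed (use hs vertex_kraus_carrier vertex_kraus_adjoint_mult_mult_mem_ncg_S[OF assms] in auto)
qed

section \<open>From a cohomomorphism to vertex isometries\<close>

definition ncg_unit :: "nat \<Rightarrow> (nat \<Rightarrow> nat) \<Rightarrow> nat \<times> nat \<Rightarrow> nat \<times> nat \<Rightarrow> complex mat" where
  "ncg_unit r n g1 g2 =
    ncg_block_mat r n n (\<lambda>g g'. if g = g1 \<and> g' = g2 then 1\<^sub>m (fst g) else 0\<^sub>m (fst g) (fst g'))"

lemma ncg_unit_carrier: "ncg_unit r n g1 g2 \<in> carrier_mat (ncg_dim r n) (ncg_dim r n)"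
  unfolding ncg_unit_def by (rule ncg_block_mat_carrier)

lemma ncg_block_ncg_unit:
  assumes "fst g1 = fst g2" "g \<in> vtx r n" "g' \<in> vtx r n"
  shows "ncg_block n n (ncg_unit r n g1 g2) g g' =
    (if g = g1 \<and> g' = g2 then 1\<^sub>m (fst g) else 0\<^sub>m (fst g) (fst g'))"
  unfolding ncg_unit_def using assms by (intro ncg_block_ncg_block_mat) auto

lemma ncg_unit_mem_ncg_S:
  assumes "simeq E g1 g2"
  shows "ncg_unit r n g1 g2 \<in> ncg_S r n E"
proof -
  have "fst g1 = fst g2"
    using assms by (simp add: simeq_def)
  show ?thesis
    unfolding mem_ncg_S_iff
  proof (intro conjI exI[of _ "\<lambda>g g'. if g = g1 \<and> g' = g2 then 1 else 0"] ballI)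
    show "ncg_unit r n g1 g2 \<in> carrier_mat (ncg_dim r n) (ncg_dim r n)"
      by (rule ncg_unit_carrier)
    fix g g'
    assume "g \<in> vtx r n" "g' \<in> vtx r n"
    then show "ncg_block n n (ncg_unit r n g1 g2) g g' = (if simeq E g g'
        then (if g = g1 \<and> g' = g2 then 1 else 0) \<cdot>\<^sub>m 1\<^sub>m (fst g) else 0\<^sub>m (fst g) (fst g'))"
      using assms \<open>fst g1 = fst g2\<close> by (auto simp: ncg_block_ncg_unit simeq_def)
  qed
qed

lemma ncg_block_adjoint_mult_ncg_unit_mult:
  assumes A: "A \<in> carrier_mat (ncg_dim r n) (ncg_dim r n1)"
    and B: "B \<in> carrier_mat (ncg_dim r n) (ncg_dim r n2)"
    and g: "g1 \<in> vtx r n" "g2 \<in> vtx r n" "fst g1 = fst g2"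
    and h: "h \<in> vtx r n1" "h' \<in> vtx r n2"
  shows "ncg_block n1 n2 (mat_adjoint A * ncg_unit r n g1 g2 * B) h h' =
    mat_adjoint (ncg_block n n1 A g1 h) * ncg_block n n2 B g2 h'"
    (is "?L = ?R")
proof (rule eq_matI)
  fix l l'
  assume "l < dim_row ?R" "l' < dim_col ?R"
  then have l: "l < fst h" "l' < fst h'"
    by simp_all
  have "?L $$ (l, l') = (\<Sum>g\<in>vtx r n. \<Sum>g'\<in>vtx r n. (mat_adjoint (ncg_block n n1 A g h) *
      ncg_block n n (ncg_unit r n g1 g2) g g' * ncg_block n n2 B g' h') $$ (l, l'))"
    by (rule index_ncg_block_adjoint_mult_mult[OF A ncg_unit_carrier B h(1) l(1) h(2) l(2)])
  also have "\<dots> = (mat_adjoint (ncg_block n n1 A g1 h) * 1\<^sub>m (fst g1) * ncg_block n n2 B g2 h') $$ (l, l')"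
    using g h l by (subst sum_sum_eq_single[OF finite_vtx finite_vtx g(1,2)]) (auto simp: ncg_block_ncg_unit)
  also have "\<dots> = ?R $$ (l, l')"
    by simp
  finally show "?L $$ (l, l') = ?R $$ (l, l')" .
qed simp_all

lemma ncg_block_gram_scalar:
  assumes E1: "E1 \<in> carrier_mat (ncg_dim r nG) (ncg_dim r nH)"
    and E2: "E2 \<in> carrier_mat (ncg_dim r nG) (ncg_dim r nH)"
    and closed: "\<forall>X\<in>ncg_S r nG EG. mat_adjoint E1 * X * E2 \<in> ncg_S r nH EH"
    and g: "g1 \<in> vtx r nG" "g2 \<in> vtx r nG" "simeq EG g1 g2"
    and h: "h1 \<in> vtx r nH" "h2 \<in> vtx r nH"
  shows "\<exists>c. mat_adjoint (ncg_block nG nH E1 g1 h1) * ncg_block nG nH E2 g2 h2 =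
    (if simeq EH h1 h2 then c \<cdot>\<^sub>m 1\<^sub>m (fst h1) else 0\<^sub>m (fst h1) (fst h2))"
proof -
  have "mat_adjoint E1 * ncg_unit r nG g1 g2 * E2 \<in> ncg_S r nH EH"
    using closed ncg_unit_mem_ncg_S[OF g(3)] by blast
  then obtain c where "ncg_block nH nH (mat_adjoint E1 * ncg_unit r nG g1 g2 * E2) h1 h2 =
      (if simeq EH h1 h2 then c \<cdot>\<^sub>m 1\<^sub>m (fst h1) else 0\<^sub>m (fst h1) (fst h2))"
    using h unfolding mem_ncg_S_iff by blast
  moreover have "fst g1 = fst g2"
    using g(3) by (simp add: simeq_def)
  ultimately show ?thesis
    using ncg_block_adjoint_mult_ncg_unit_mult[OF E1 E2 g(1,2) _ h] by auto
qed

lemma kraus_block_choice: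
  assumes Es: "\<forall>E\<in>set Es. E \<in> carrier_mat (ncg_dim r nG) (ncg_dim r nH)"
    and sum: "foldr (+) (map (\<lambda>E. mat_adjoint E * E) Es) (0\<^sub>m (ncg_dim r nH) (ncg_dim r nH)) =
      1\<^sub>m (ncg_dim r nH)"
  obtains E \<phi> where "\<forall>h\<in>vtx r nH. E h \<in> set Es \<and> \<phi> h \<in> vtx r nG \<and>
    (\<exists>k<fst (\<phi> h). ncg_block nG nH (E h) (\<phi> h) h $$ (k, 0) \<noteq> 0)"
proof -
  have "\<forall>h\<in>vtx r nH. \<exists>Eg. fst Eg \<in> set Es \<and> snd Eg \<in> vtx r nG \<and>
      (\<exists>k<fst (snd Eg). ncg_block nG nH (fst Eg) (snd Eg) h $$ (k, 0) \<noteq> 0)"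
  proof
    fix h
    assume h: "h \<in> vtx r nH"
    then have h0: "0 < fst h"
      using vtxD[OF h] by simp
    obtain E i where E: "E \<in> set Es" "i < ncg_dim r nG" "E $$ (i, ncg_index nH h 0) \<noteq> 0"
      using kraus_column_nonzero[OF Es sum ncg_index_less[OF h h0]] by blast
    moreover obtain g k where "g \<in> vtx r nG" "k < fst g" "i = ncg_index nG g k"
      using ncg_index_cases[OF E(2)] by blast
    ultimately show "\<exists>Eg. fst Eg \<in> set Es \<and> snd Eg \<in> vtx r nG \<and>
        (\<exists>k<fst (snd Eg). ncg_block nG nH (fst Eg) (snd Eg) h $$ (k, 0) \<noteq> 0)"
      using h0 by (intro exI[of _ "(E, g)"]) auto
  qed
  then obtain f where "\<forall>h\<in>vtx r nH. fst (f h) \<in> set Es \<and> snd (f h) \<in> vtx r nG \<and>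
      (\<exists>k<fst (snd (f h)). ncg_block nG nH (fst (f h)) (snd (f h)) h $$ (k, 0) \<noteq> 0)"
    by (rule bchoice[elim_format]) blast
  then show ?thesis
    by (intro that[of "\<lambda>h. fst (f h)" "\<lambda>h. snd (f h)"])
qed

lemma vertex_isometries_if_cohom:
  assumes "cohom (ncg_S r nH EH) (ncg_dim r nH) (ncg_S r nG EG) (ncg_dim r nG)"
  shows "\<exists>\<phi> U. vertex_isometries r nH EH nG EG \<phi> U"
proof -
  obtain Es where Es: "\<forall>E\<in>set Es. E \<in> carrier_mat (ncg_dim r nG) (ncg_dim r nH)"
    and sum: "foldr (+) (map (\<lambda>E. mat_adjoint E * E) Es) (0\<^sub>m (ncg_dim r nH) (ncg_dim r nH)) =
      1\<^sub>m (ncg_dim r nH)"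
    and closed: "\<forall>Ei\<in>set Es. \<forall>Ej\<in>set Es. \<forall>X\<in>ncg_S r nG EG. mat_adjoint Ei * X * Ej \<in> ncg_S r nH EH"
    using assms unfolding cohom_def by blast
  obtain E \<phi> where E\<phi>: "\<forall>h\<in>vtx r nH. E h \<in> set Es \<and> \<phi> h \<in> vtx r nG \<and>
      (\<exists>k<fst (\<phi> h). ncg_block nG nH (E h) (\<phi> h) h $$ (k, 0) \<noteq> 0)"
    by (rule kraus_block_choice[OF Es sum])
  define V where "V h = ncg_block nG nH (E h) (\<phi> h) h" for h
  define U where "U h = col_normalize (V h)" for h
  have V: "V h \<in> carrier_mat (fst (\<phi> h)) (fst h)" for h
    unfolding V_def by simp
  have gram: "\<exists>c. mat_adjoint (V h) * V h' =
      (if simeq EH h h' then c \<cdot>\<^sub>m 1\<^sub>m (fst h) else 0\<^sub>m (fst h) (fst h'))"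
    if "h \<in> vtx r nH" "h' \<in> vtx r nH" "simeq EG (\<phi> h) (\<phi> h')" for h h'
    unfolding V_def using that E\<phi> Es closed by (intro ncg_block_gram_scalar) auto
  have gramU: "\<exists>c. mat_adjoint (U h) * U h' =
      (if simeq EH h h' then c \<cdot>\<^sub>m 1\<^sub>m (fst h) else 0\<^sub>m (fst h) (fst h'))"
    if "h \<in> vtx r nH" "h' \<in> vtx r nH" "simeq EG (\<phi> h) (\<phi> h')" for h h'
  proof -
    have "fst (\<phi> h) = fst (\<phi> h')"
      using that(3) by (simp add: simeq_def)
    then show ?thesis
      using gram[OF that] V[of h] V[of h'] unfolding U_def by (metis adjoint_mult_col_normalize_scalar)
  qed
  have iso: "mat_adjoint (U h) * U h = 1\<^sub>m (fst h)" if h: "h \<in> vtx r nH" for h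
  proof -
    obtain c where "mat_adjoint (V h) * V h = c \<cdot>\<^sub>m 1\<^sub>m (fst h)"
      using gram[OF h h simeq_refl] simeq_refl by auto
    moreover obtain k where "k < fst (\<phi> h)" "V h $$ (k, 0) \<noteq> 0"
      using E\<phi> h unfolding V_def by blast
    then have "0 < col_norm (V h) 0"
      using V[of h] by (intro col_norm_pos) auto
    ultimately show ?thesis
      unfolding U_def using V[of h] vtxD[OF h] by (intro col_normalize_isometry) auto
  qed
  show ?thesis
    unfolding vertex_isometries_def
  proof (intro exI[of _ \<phi>] exI[of _ U] conjI ballI impI)
    fix h h'
    assume h: "h \<in> vtx r nH" and h': "h' \<in> vtx r nH"
    show "\<not> simeq EG (\<phi> h) (\<phi> h') \<or> mat_adjoint (U h) * U h' = 0\<^sub>m (fst h) (fst h')"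
      if "\<not> simeq EH h h'"
      using gramU[OF h h'] that by auto
    show "\<exists>c. mat_adjoint (U h) * U h' = c \<cdot>\<^sub>m 1\<^sub>m (fst h)"
      if "simeq EH h h' \<and> simeq EG (\<phi> h) (\<phi> h')"
      using gramU[OF h h'] that by auto
  qed (use E\<phi> iso V in \<open>auto simp: U_def col_normalize_def\<close>)
qed

theorem lemma3p5:
  fixes r :: nat
    and nG nH :: "nat \<Rightarrow> nat"
    and EG EH :: "nat \<Rightarrow> nat \<Rightarrow> nat \<Rightarrow> bool"
  assumes "\<forall>d\<in>{1..r}. simple_graph (nG d) (EG d)"
    and "\<forall>d\<in>{1..r}. simple_graph (nH d) (EH d)"
  shows "cohom (ncg_S r nH EH) (ncg_dim r nH) (ncg_S r nG EG) (ncg_dim r nG) \<longleftrightarrow>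
    (\<exists>(\<phi> :: nat \<times> nat \<Rightarrow> nat \<times> nat) (U :: nat \<times> nat \<Rightarrow> complex mat).
       (\<forall>h\<in>vtx r nH. \<phi> h \<in> vtx r nG) \<and>
       (\<forall>h\<in>vtx r nH. U h \<in> carrier_mat (piv (\<phi> h)) (piv h) \<and>
                        mat_adjoint (U h) * U h = 1\<^sub>m (piv h)) \<and>
       (\<forall>h\<in>vtx r nH. \<forall>h'\<in>vtx r nH.
          (\<not> simeq EH h h' \<longrightarrow>
             \<not> simeq EG (\<phi> h) (\<phi> h') \<or> mat_adjoint (U h) * U h' = 0\<^sub>m (piv h) (piv h')) \<and>
          (simeq EH h h' \<and> simeq EG (\<phi> h) (\<phi> h') \<longrightarrow>
             (\<exists>c :: complex. mat_adjoint (U h) * U h' = c \<cdot>\<^sub>m 1\<^sub>m (piv h)))))"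
proof -
  (* The argument never uses that the graphs are simple. *)
  have "cohom (ncg_S r nH EH) (ncg_dim r nH) (ncg_S r nG EG) (ncg_dim r nG) \<longleftrightarrow>
      (\<exists>\<phi> U. vertex_isometries r nH EH nG EG \<phi> U)"
    using cohom_ncg_S_if_vertex_isometries vertex_isometries_if_cohom by blast
  then show ?thesis
    by (simp only: vertex_isometries_def piv_def)
qed

end
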